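(* Let $h$ be a positive integer and let $S_1,\ldots,S_n$ be sets of positive integers. For each $i$ let $G_{S_i}$ denote the $\mathcal{G}$-value sequence of $\mathrm{Subtraction}(S_i)$, and suppose that there exist sequences $a_1,\ldots,a_n$ of non-negative integers such that, for every $i$, $G_{S_i}$ is the $h$-stair of $a_i$, i.e. $G_{S_i}(xh+r)=a_i(x)h+r$ for all integers $x\ge 0$ and all $r\in\{0,1,\ldots,h-1\}$. Then for every position $(x_1,\ldots,x_n)$ of the generalized cyclic Nimhoff $\mathrm{GCN}(h;S_1,\ldots,S_n)$, $$\mathcal{G}(x_1,\ldots,x_n)=\left(\bigoplus_{i=1}^n\left\lfloor \frac{G_{S_i}(x_i)}{h}\right\rfloor\right)h+\left(\sum_{i=1}^n x_i\right)\bmod h.$$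
   Context: All games are impartial two-player games under the normal play rule (the player making the last move wins). For a finite set $T\subset\mathbb{N}_0$, $\mathrm{mex}\,T=\min(\mathbb{N}_0\setminus T)$. The $\mathcal{G}$-value (Grundy value) of a position $G$ is defined recursively by $\mathcal{G}(G)=\mathrm{mex}\{\mathcal{G}(G')\mid G\to G'\}$, where $G\to G'$ means $G'$ is reachable from $G$ in one move. The nim-sum $m_1\oplus\cdots\oplus m_n$ of non-negative integers is binary addition without carry (bitwise XOR). For a set $S$ of positive integers, $\mathrm{Subtraction}(S)$ is the game played on a single heap of $x\ge 0$ tokens, where a move takes a heap of $x$ tokens to a heap of $x-s$ tokens for some $s\in S$ with $s\le x$; its $\mathcal{G}$-value sequence is $G_S(x)$, the $\mathcal{G}$-value of a heap of $x$ tokens, $x=0,1,2,\ldots$. The generalized cyclic Nimhoff $\mathrm{GCN}(h;S_1,\ldots,S_n)$ has as positions the $n$-tuples $(x_1,\ldots,x_n)$ of non-negative integers; from $(x_1,\ldots,x_n)$ the legal moves go to any $n$-tuple of non-negative integers of one of the following forms: (i) $(x_1,\ldots,x_i-s_i,\ldots,x_n)$ for some $i$ and some $s_i\in S_i$ (only coordinate $i$ changed); or (ii) $(x_1-s_1,\ldots,x_n-s_n)$ where $s_1,\ldots,s_n$ are non-negative integers with $0<\sum_{i=1}^n s_i<h$. *)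

theory Defs
  imports Main
begin

definition mex :: "nat set \<Rightarrow> nat" where
  "mex T = (LEAST m. m \<notin> T)"

text \<open>Grundy value of a position of a game given by a move relation
  M p q  (p \<rightarrow> q), defined by well-founded recursion on the
  converse of the move relation (meaningful when no infinite play exists).\<close>
definition grundy :: "('a \<Rightarrow> 'a \<Rightarrow> bool) \<Rightarrow> 'a \<Rightarrow> nat" where
  "grundy M = wfrec {(q, p). M p q} (\<lambda>g p. mex (g ` {q. M p q}))"

definition sub_move :: "nat set \<Rightarrow> nat \<Rightarrow> nat \<Rightarrow> bool" where
  "sub_move S x y \<longleftrightarrow> (\<exists>s\<in>S. s \<le> x \<and> y = x - s)"

definition G_sub :: "nat set \<Rightarrow> nat \<Rightarrow> nat" where
  "G_sub S = grundy (sub_move S)"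

text \<open>Generalized cyclic Nimhoff GCN(h; S_1,...,S_n); positions are lists of
  length n, Ss is the list [S_1,...,S_n].\<close>
definition gcn_move :: "nat \<Rightarrow> nat set list \<Rightarrow> nat list \<Rightarrow> nat list \<Rightarrow> bool" where
  "gcn_move h Ss xs ys \<longleftrightarrow> length ys = length xs \<and>
     ((\<exists>i < length xs. \<exists>s \<in> Ss ! i. s \<le> xs ! i \<and> ys = xs[i := xs ! i - s]) \<or>
      (\<exists>ss. length ss = length xs \<and> (\<forall>i < length xs. ss ! i \<le> xs ! i) \<and>
            0 < sum_list ss \<and> sum_list ss < h \<and> ys = map2 (-) xs ss))"

definition nimsum :: "nat list \<Rightarrow> nat" where
  "nimsum xs = foldr (\<lambda>a b. Bit_Operations.xor a b) xs 0"

end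

(*
  Write F(x) = (XOR_i floor(G_i(x_i)/h)) h + (sum_i x_i) mod h. It suffices to check that F
  satisfies the mex recursion on positions of length n, which is done by induction on the
  total number of tokens. Since G_i is an h-stair, G_i(y) mod h = y mod h and floor(G_i(y)/h)
  depends only on floor(y/h). A single-heap move preserving sum mod h removes a multiple of h
  tokens, hence keeps G_i mod h and so must change floor(G_i/h) and the nim-part; a diagonal
  move removes between 1 and h-1 tokens and so changes sum mod h. Conversely, a value v < F(x)
  whose quotient by h equals the nim-part is reached by a diagonal move removing tokens from the
  residues x_i mod h only, and one with smaller quotient by the Nim move on the quotients,
  realised in a single Subtraction(S_i) component, whose target G-value can be chosen with any
  residue, in particular the one fixing sum mod h.
*)

theory Submission
  imports Defs
begin

unbundle bit_operations_syntax

lemma mex_notin: "finite T \<Longrightarrow> mex T \<notin> T"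
  unfolding mex_def by (rule LeastI_ex) (meson ex_new_if_finite infinite_UNIV_nat)

lemma less_mex_imp_mem: "v < mex T \<Longrightarrow> v \<in> T"
  unfolding mex_def using not_less_Least by blast

lemma mex_eqI: "m \<notin> T \<Longrightarrow> (\<And>v. v < m \<Longrightarrow> v \<in> T) \<Longrightarrow> mex T = m"
  unfolding mex_def by (rule Least_equality) (auto simp: not_less[symmetric])

text \<open>The move relation of a game need not be well-founded (in GCN, lists of the wrong
  length may index nonexistent subtraction sets), so the recursion defining grundy is
  unfolded only at accessible positions.\<close>

lemma wfrec_unique_acc:
  assumes "adm_wf R F" "x \<in> Wellfounded.acc R"
  shows "\<exists>!y. wfrec_rel R F x y"
  using assms(2)
proof (induct rule: acc_induct_rule)
  case (1 x)
  define f where "f y = (THE z. wfrec_rel R F y z)" for y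
  from 1 have "\<And>y z. (y, x) \<in> R \<Longrightarrow> wfrec_rel R F y z \<longleftrightarrow> z = f y"
    unfolding f_def by (intro theI_unique) blast
  with \<open>adm_wf R F\<close> show ?case
    by (subst wfrec_rel.simps) (auto simp: adm_wf_def)
qed

lemma wfrec_acc:
  assumes "a \<in> Wellfounded.acc R"
  shows "wfrec R F a = F (cut (wfrec R F) R a) a"
proof -
  have unique: "\<exists>!y. wfrec_rel R (\<lambda>f x. F (cut f R x) x) z y" if "z \<in> Wellfounded.acc R" for z
    using wfrec_unique_acc[OF adm_lemma that] .
  have "wfrec_rel R (\<lambda>f x. F (cut f R x) x) a (F (cut (wfrec R F) R a) a)"
  proof (rule wfrec_rel.wfrecI)
    fix z assume "(z, a) \<in> R"
    then have "z \<in> Wellfounded.acc R" using acc_downward[OF assms] by blast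
    then show "wfrec_rel R (\<lambda>f x. F (cut f R x) x) z (wfrec R F z)"
      unfolding wfrec_def by (rule theI'[OF unique])
  qed
  then show ?thesis
    unfolding wfrec_def by (rule the1_equality[OF unique[OF assms]])
qed

lemma grundy_acc:
  assumes "p \<in> Wellfounded.acc {(q, p). M p q}"
  shows "grundy M p = mex (grundy M ` {q. M p q})"
proof -
  have "grundy M p = mex (cut (grundy M) {(q, p). M p q} p ` {q. M p q})"
    unfolding grundy_def by (subst wfrec_acc[OF assms]) simp
  also have "cut (grundy M) {(q, p). M p q} p ` {q. M p q} = grundy M ` {q. M p q}"
    by (auto simp: cut_apply intro!: image_cong)
  finally show ?thesis .
qed

lemma grundy_move_neq:
  assumes "p \<in> Wellfounded.acc {(q, p). M p q}" "finite {q. M p q}" "M p q"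
  shows "grundy M q \<noteq> grundy M p"
proof
  assume "grundy M q = grundy M p"
  with assms(3) have "grundy M p \<in> grundy M ` {q. M p q}" by (metis imageI mem_Collect_eq)
  then show False
    using mex_notin[OF finite_imageI[OF assms(2)]] grundy_acc[OF assms(1)] by metis
qed

lemma grundy_less_ex_move:
  assumes "p \<in> Wellfounded.acc {(q, p). M p q}" "v < grundy M p"
  shows "\<exists>q. M p q \<and> grundy M q = v"
  using less_mex_imp_mem[of v "grundy M ` {q. M p q}"] assms by (auto simp: grundy_acc)

lemma acc_of_decreasing_measure:
  fixes \<mu> :: "'a \<Rightarrow> nat"
  assumes step: "\<And>p q. p \<in> P \<Longrightarrow> M p q \<Longrightarrow> q \<in> P \<and> \<mu> q < \<mu> p" and "p \<in> P"
  shows "p \<in> Wellfounded.acc {(q, p). M p q}"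
  using \<open>p \<in> P\<close>
proof (induction p rule: measure_induct_rule[of \<mu>])
  case (less p)
  show ?case
    by (rule accI) (use less step in blast)
qed

lemma grundy_eqI:
  fixes \<mu> :: "'a \<Rightarrow> nat"
  assumes step: "\<And>p q. p \<in> P \<Longrightarrow> M p q \<Longrightarrow> q \<in> P \<and> \<mu> q < \<mu> p"
    and move_neq: "\<And>p q. p \<in> P \<Longrightarrow> M p q \<Longrightarrow> F q \<noteq> F p"
    and less_ex_move: "\<And>p v. p \<in> P \<Longrightarrow> v < F p \<Longrightarrow> \<exists>q. M p q \<and> F q = v"
    and "p \<in> P"
  shows "grundy M p = F p"
  using \<open>p \<in> P\<close>
proof (induction p rule: measure_induct_rule[of \<mu>])
  case (less p)
  have "grundy M q = F q" if "M p q" for q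
    using less.IH step[OF less.prems that] by blast
  then have "grundy M ` {q. M p q} = F ` {q. M p q}"
    by (intro image_cong) auto
  then have "grundy M p = mex (F ` {q. M p q})"
    using grundy_acc[OF acc_of_decreasing_measure[OF step less.prems]] by simp
  also have "\<dots> = F p"
  proof (rule mex_eqI)
    show "F p \<notin> F ` {q. M p q}"
      using move_neq[OF less.prems] by fastforce
    show "v \<in> F ` {q. M p q}" if "v < F p" for v
      using less_ex_move[OF less.prems that] by blast
  qed
  finally show ?case .
qed

lemma sub_move_acc: "\<forall>s\<in>S. 0 < s \<Longrightarrow> x \<in> Wellfounded.acc {(y, x). sub_move S x y}"
  by (rule acc_of_decreasing_measure[where P = UNIV and \<mu> = id]) (auto simp: sub_move_def)

lemma finite_sub_move: "finite {y. sub_move S x y}"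
  by (rule finite_subset[of _ "{..x}"]) (auto simp: sub_move_def)

lemma G_sub_move_neq: "\<forall>s\<in>S. 0 < s \<Longrightarrow> sub_move S x y \<Longrightarrow> G_sub S y \<noteq> G_sub S x"
  unfolding G_sub_def by (rule grundy_move_neq[OF sub_move_acc finite_sub_move])

lemma G_sub_less_ex_move:
  "\<forall>s\<in>S. 0 < s \<Longrightarrow> v < G_sub S x \<Longrightarrow> \<exists>y. sub_move S x y \<and> G_sub S y = v"
  unfolding G_sub_def by (rule grundy_less_ex_move[OF sub_move_acc])

lemma xor_left_self_nat: "(a::nat) XOR (a XOR b) = b"
  by (simp flip: xor.assoc)

lemma xor_xor_eq_self_imp_eq: "(n::nat) XOR a XOR b = n \<Longrightarrow> a = b"
  by (metis xor_left_self_nat xor_self_eq xor.right_neutral)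

lemma nimsum_Cons: "nimsum (a # L) = a XOR nimsum L"
  by (simp add: nimsum_def)

lemma nimsum_list_update:
  "i < length L \<Longrightarrow> nimsum (L[i := t]) = nimsum L XOR L ! i XOR t"
proof (induction L arbitrary: i)
  case Nil then show ?case by simp
next
  case (Cons a L)
  show ?case
  proof (cases i)
    case 0 then show ?thesis
      by (simp add: nimsum_Cons xor.assoc xor_left_self_nat xor.left_commute[of a] xor.commute)
  next
    case (Suc j) then show ?thesis using Cons
      by (simp add: nimsum_Cons xor.assoc)
  qed
qed

lemma bit_nimsum_imp_ex: "bit (nimsum L) k \<Longrightarrow> \<exists>x\<in>set L. bit x k"
  by (induction L) (auto simp: nimsum_def bit_xor_iff)

lemma less_by_highest_differing_bit:
  fixes x y :: nat
  assumes "drop_bit (Suc k) x = drop_bit (Suc k) y" "bit x k" "\<not> bit y k"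
  shows "y < x"
proof -
  have "x = push_bit (Suc k) (drop_bit (Suc k) x) + 2 ^ k + take_bit k x"
    using bits_ident[of "Suc k" x] take_bit_Suc_from_most[of k x] assms(2) by simp
  moreover have "y = push_bit (Suc k) (drop_bit (Suc k) x) + take_bit k y"
    using bits_ident[of "Suc k" y] take_bit_Suc_from_most[of k y] assms(1,3) by simp
  moreover have "take_bit k y < 2 ^ k" by simp
  ultimately show ?thesis by linarith
qed

lemma nimsum_less_ex_decrease:
  fixes v :: nat
  assumes "v < nimsum L"
  shows "\<exists>i < length L. L ! i XOR nimsum L XOR v < L ! i"
proof -
  \<comment> \<open>The highest bit of D is set in nimsum L, hence in some summand, and XOR-ing
    D into that summand clears this bit without touching higher ones.\<close>
  define D where "D = nimsum L XOR v"
  have v_eq: "v = nimsum L XOR D"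
    by (simp add: D_def xor_left_self_nat)
  then have "D \<noteq> 0" using assms by (metis xor.right_neutral less_irrefl)
  then obtain k where k: "2 ^ k \<le> D" "D < 2 ^ Suc k"
    using ex_power_ivl1[of 2 D] by auto
  then have "D div 2 ^ k = 1"
    by (simp add: div_greater_zero_iff Suc_le_eq div_less_iff_less_mult mult.commute le_antisym
        flip: less_Suc_eq_le)
  then have bit_D: "bit D k" by (simp add: bit_iff_odd)
  have "drop_bit (Suc k) D = 0" using k by (simp add: drop_bit_eq_div)
  then have same_high: "drop_bit (Suc k) (x XOR D) = drop_bit (Suc k) x" for x
    by simp
  have "bit (nimsum L) k"
  proof (rule ccontr)
    assume "\<not> bit (nimsum L) k"
    then have "nimsum L < v"
      using less_by_highest_differing_bit[of k v "nimsum L"] same_high[of "nimsum L"] bit_D v_eq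
      by (simp add: bit_xor_iff)
    with assms show False by simp
  qed
  then obtain x where x: "x \<in> set L" "bit x k" using bit_nimsum_imp_ex by blast
  then have "x XOR D < x"
    using less_by_highest_differing_bit[of k x "x XOR D"] same_high[of x] bit_D
    by (simp add: bit_xor_iff)
  with x(1) show ?thesis unfolding D_def by (metis in_set_conv_nth)
qed

lemma sum_list_map2_diff:
  fixes xs :: "nat list"
  assumes "length ss = length xs" "\<forall>i<length xs. ss ! i \<le> xs ! i"
  shows "sum_list (map2 (-) xs ss) + sum_list ss = sum_list xs"
  using assms
proof (induction xs arbitrary: ss)
  case Nil then show ?case by simp
next
  case (Cons x xs)
  then obtain s ss' where ss: "ss = s # ss'" by (cases ss) auto
  have "s \<le> x" using Cons.prems ss by force
  moreover have "sum_list (map2 (-) xs ss') + sum_list ss' = sum_list xs"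
    using Cons.prems ss by (intro Cons.IH) auto
  ultimately show ?case using ss by simp
qed

lemma ex_bounded_summands:
  fixes f :: "'a \<Rightarrow> nat"
  assumes "d \<le> sum_list (map f xs)"
  shows "\<exists>ss. length ss = length xs \<and> (\<forall>i<length xs. ss ! i \<le> f (xs ! i)) \<and> sum_list ss = d"
  using assms
proof (induction xs arbitrary: d)
  case Nil then show ?case by simp
next
  case (Cons x xs)
  define s where "s = min d (f x)"
  have "d - s \<le> sum_list (map f xs)" using Cons.prems by (simp add: s_def)
  then obtain ss where "length ss = length xs" "\<forall>i<length xs. ss ! i \<le> f (xs ! i)"
      "sum_list ss = d - s"
    using Cons.IH by blast
  then show ?case
    by (intro exI[of _ "s # ss"]) (auto simp: s_def nth_Cons split: nat.splits)
qed

lemma sum_list_mod_le: "sum_list xs mod h \<le> sum_list (map (\<lambda>x. x mod h) xs)" for h :: nat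
proof (induction xs)
  case Nil then show ?case by simp
next
  case (Cons x xs)
  have "sum_list (x # xs) mod h = (x mod h + sum_list xs mod h) mod h" by (simp add: mod_add_eq)
  also have "\<dots> \<le> x mod h + sum_list xs mod h" by (rule mod_less_eq_dividend)
  finally show ?case using Cons by simp
qed

lemma mod_add_eq_imp_dvd: "(a + d) mod h = a mod h \<Longrightarrow> h dvd (d::nat)"
  by (metis le_add1 mod_eq_dvd_iff_nat add_diff_cancel_left')

lemma diff_div_eq_of_le_mod:
  fixes x s h :: nat
  assumes "s \<le> x mod h"
  shows "(x - s) div h = x div h"
proof -
  have "x - s = x div h * h + (x mod h - s)" using div_mult_mod_eq[of x h] assms by linarith
  moreover have "x mod h - s < h" if "0 < h"
    using that by (meson le_less_trans diff_le_self mod_less_divisor)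
  ultimately show ?thesis by (cases "h = 0") simp_all
qed


locale stair_gcn =
  fixes h :: nat and Ss :: "nat set list"
  assumes h_pos: "0 < h"
    and subtraction_sets_pos: "\<forall>S \<in> set Ss. \<forall>s \<in> S. 0 < s"
    and G_sub_stair: "\<forall>i < length Ss. \<exists>a :: nat \<Rightarrow> nat. \<forall>x r. r < h \<longrightarrow>
            G_sub (Ss ! i) (x * h + r) = a x * h + r"
begin

definition nim_part :: "nat list \<Rightarrow> nat" where
  "nim_part xs = nimsum (map (\<lambda>i. G_sub (Ss ! i) (xs ! i) div h) [0..<length Ss])"

definition gcn_value :: "nat list \<Rightarrow> nat" where
  "gcn_value xs = nim_part xs * h + sum_list xs mod h"

lemma Ss_nth_pos: "i < length Ss \<Longrightarrow> \<forall>s \<in> Ss ! i. 0 < s"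
  using subtraction_sets_pos by (metis nth_mem)

lemma G_sub_stair_decomp:
  assumes "i < length Ss"
  obtains a where "\<And>y. G_sub (Ss ! i) y = a (y div h) * h + y mod h"
proof -
  obtain a where "\<forall>x r. r < h \<longrightarrow> G_sub (Ss ! i) (x * h + r) = a x * h + r"
    using G_sub_stair assms by blast
  then have "G_sub (Ss ! i) y = a (y div h) * h + y mod h" for y
    using h_pos by (metis div_mult_mod_eq mod_less_divisor)
  then show thesis by (rule that)
qed

lemma G_sub_mod: "i < length Ss \<Longrightarrow> G_sub (Ss ! i) y mod h = y mod h"
  by (elim G_sub_stair_decomp) simp

lemma G_sub_div_cong:
  "i < length Ss \<Longrightarrow> y div h = z div h \<Longrightarrow> G_sub (Ss ! i) y div h = G_sub (Ss ! i) z div h"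
  by (elim G_sub_stair_decomp) (simp add: h_pos)

lemma gcn_value_eq_iff:
  "gcn_value ys = gcn_value xs \<longleftrightarrow>
     nim_part ys = nim_part xs \<and> sum_list ys mod h = sum_list xs mod h"
proof
  assume "gcn_value ys = gcn_value xs"
  then have "gcn_value ys div h = gcn_value xs div h" "gcn_value ys mod h = gcn_value xs mod h"
    by simp_all
  then show "nim_part ys = nim_part xs \<and> sum_list ys mod h = sum_list xs mod h"
    using h_pos by (simp add: gcn_value_def)
qed (simp add: gcn_value_def)

lemma nim_part_update:
  assumes "length xs = length Ss" "i < length Ss"
  shows "nim_part (xs[i := y]) =
           nim_part xs XOR G_sub (Ss ! i) (xs ! i) div h XOR G_sub (Ss ! i) y div h"
proof -
  have "map (\<lambda>j. G_sub (Ss ! j) (xs[i := y] ! j) div h) [0..<length Ss] =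
          (map (\<lambda>j. G_sub (Ss ! j) (xs ! j) div h) [0..<length Ss])[i := G_sub (Ss ! i) y div h]"
    using assms by (intro nth_equalityI) (auto simp: nth_list_update)
  then show ?thesis
    using assms(2) by (simp add: nim_part_def nimsum_list_update)
qed

lemma gcn_move_sum_less:
  assumes "length xs = length Ss" "gcn_move h Ss xs ys"
  shows "length ys = length Ss \<and> sum_list ys < sum_list xs"
proof -
  consider (heap) i s where "i < length xs" "s \<in> Ss ! i" "s \<le> xs ! i" "ys = xs[i := xs ! i - s]"
    | (diagonal) ss where "length ss = length xs" "\<forall>i<length xs. ss ! i \<le> xs ! i"
        "0 < sum_list ss" "ys = map2 (-) xs ss"
    using assms(2) unfolding gcn_move_def by blast
  then have "sum_list ys < sum_list xs"
  proof cases
    case heap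
    have "0 < s" using Ss_nth_pos heap assms(1) by simp
    moreover have "xs ! i \<le> sum_list xs" using heap by (simp add: member_le_sum_list)
    ultimately show ?thesis using heap by (auto simp: sum_list_update)
  next
    case diagonal
    then show ?thesis using sum_list_map2_diff[of ss xs] by auto
  qed
  moreover have "length ys = length xs" using assms(2) by (simp add: gcn_move_def)
  ultimately show ?thesis using assms(1) by simp
qed


lemma gcn_value_move_neq:
  assumes xs: "length xs = length Ss" and move: "gcn_move h Ss xs ys"
  shows "gcn_value ys \<noteq> gcn_value xs"
proof
  assume "gcn_value ys = gcn_value xs"
  then have nim_eq: "nim_part ys = nim_part xs" and sum_eq: "sum_list ys mod h = sum_list xs mod h"
    by (simp_all add: gcn_value_eq_iff)
  consider (heap) i s where "i < length xs" "s \<in> Ss ! i" "s \<le> xs ! i" "ys = xs[i := xs ! i - s]"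
    | (diagonal) ss where "length ss = length xs" "\<forall>i<length xs. ss ! i \<le> xs ! i"
        "0 < sum_list ss" "sum_list ss < h" "ys = map2 (-) xs ss"
    using move unfolding gcn_move_def by blast
  then show False
  proof cases
    case heap
    define c where "c = xs ! i"
    have i: "i < length Ss" using heap xs by simp
    have "sum_list ys + s = sum_list xs"
      using heap member_le_sum_list[of c xs] by (simp add: sum_list_update c_def)
    then have "h dvd s" using sum_eq mod_add_eq_imp_dvd by metis
    then have "(c - s) mod h = c mod h"
      using mod_eq_dvd_iff_nat[of "c - s" c h] heap(3) by (simp add: c_def)
    then have "G_sub (Ss ! i) (c - s) mod h = G_sub (Ss ! i) c mod h"
      using G_sub_mod[OF i] by simp
    moreover have "G_sub (Ss ! i) (c - s) \<noteq> G_sub (Ss ! i) c"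
      using G_sub_move_neq[OF Ss_nth_pos[OF i]] heap by (auto simp: sub_move_def c_def)
    ultimately have "G_sub (Ss ! i) c div h \<noteq> G_sub (Ss ! i) (c - s) div h"
      by (metis div_mult_mod_eq)
    moreover have "nim_part ys =
        nim_part xs XOR G_sub (Ss ! i) c div h XOR G_sub (Ss ! i) (c - s) div h"
      using nim_part_update[OF xs i] heap by (simp add: c_def)
    ultimately show False using nim_eq xor_xor_eq_self_imp_eq by metis
  next
    case diagonal
    then have "sum_list ys + sum_list ss = sum_list xs" using sum_list_map2_diff by blast
    then have "h dvd sum_list ss" using sum_eq mod_add_eq_imp_dvd by metis
    then show False using diagonal by (meson dvd_imp_le not_le)
  qed
qed

lemma gcn_value_reach_same_nim_part:
  assumes xs: "length xs = length Ss" and "v < gcn_value xs" and v_div: "v div h = nim_part xs"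
  shows "\<exists>ys. gcn_move h Ss xs ys \<and> gcn_value ys = v"
proof -
  have v_eq: "v = nim_part xs * h + v mod h" using v_div by (metis div_mult_mod_eq)
  then have v_mod_less: "v mod h < sum_list xs mod h" using assms(2) by (simp add: gcn_value_def)
  define d where "d = sum_list xs mod h - v mod h"
  have "d \<le> sum_list (map (\<lambda>x. x mod h) xs)" using sum_list_mod_le[of xs h] d_def by linarith
  then obtain ss where ss: "length ss = length xs" "\<forall>i<length xs. ss ! i \<le> xs ! i mod h"
      "sum_list ss = d"
    using ex_bounded_summands[of d "\<lambda>x. x mod h" xs] by auto
  have ss_le: "\<forall>i<length xs. ss ! i \<le> xs ! i" using ss(2) by (meson le_trans mod_less_eq_dividend)
  define ys where "ys = map2 (-) xs ss"
  have "d < h" using h_pos d_def by (meson diff_le_self le_less_trans mod_less_divisor)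
  then have move: "gcn_move h Ss xs ys"
    unfolding gcn_move_def ys_def using ss ss_le v_mod_less d_def by auto
  have "nim_part ys = nim_part xs" unfolding nim_part_def
  proof (rule arg_cong[where f = nimsum], rule map_cong[OF refl])
    fix j assume "j \<in> set [0..<length Ss]"
    then have j: "j < length Ss" by simp
    then have "ys ! j div h = xs ! j div h"
      using ss xs diff_div_eq_of_le_mod by (simp add: ys_def)
    then show "G_sub (Ss ! j) (ys ! j) div h = G_sub (Ss ! j) (xs ! j) div h"
      using G_sub_div_cong[OF j] by blast
  qed
  moreover have "sum_list ys + d = sum_list xs"
    using sum_list_map2_diff[OF ss(1) ss_le] ss(3) by (simp add: ys_def)
  then have "sum_list ys = sum_list xs div h * h + v mod h"
    using v_mod_less d_def div_mult_mod_eq[of "sum_list xs" h] by linarith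
  then have "sum_list ys mod h = v mod h" by simp
  ultimately have "gcn_value ys = v" using v_eq by (simp add: gcn_value_def)
  with move show ?thesis by blast
qed

lemma gcn_value_reach_smaller_nim_part:
  assumes xs: "length xs = length Ss" and less: "v div h < nim_part xs"
  shows "\<exists>ys. gcn_move h Ss xs ys \<and> gcn_value ys = v"
proof -
  define L where "L = map (\<lambda>j. G_sub (Ss ! j) (xs ! j) div h) [0..<length Ss]"
  obtain i where "i < length L" and t_less: "L ! i XOR nimsum L XOR v div h < L ! i"
    using nimsum_less_ex_decrease less unfolding nim_part_def L_def by blast
  then have i: "i < length Ss" by (simp add: L_def)
  define t where "t = L ! i XOR nimsum L XOR v div h"
  define c where "c = xs ! i"
  define a where "a = sum_list xs - c"
  define r where "r = (v + (h - 1) * a) mod h" \<comment> \<open>so that (a + r) mod h = v mod h\<close>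
  have L_i: "L ! i = G_sub (Ss ! i) c div h" using i by (simp add: L_def c_def)
  have r_less: "r < h" using h_pos by (simp add: r_def)
  have "t * h + r < (t + 1) * h" using r_less by simp
  also have "\<dots> \<le> G_sub (Ss ! i) c div h * h"
    using t_less L_i by (intro mult_le_mono1) (simp add: t_def)
  also have "\<dots> \<le> G_sub (Ss ! i) c" by (metis div_mult_mod_eq le_add1)
  finally obtain y where "sub_move (Ss ! i) c y" and G_y: "G_sub (Ss ! i) y = t * h + r"
    using G_sub_less_ex_move[OF Ss_nth_pos[OF i]] by blast
  then obtain s where s: "s \<in> Ss ! i" "s \<le> c" "y = c - s" by (auto simp: sub_move_def)
  define ys where "ys = xs[i := y]"
  have move: "gcn_move h Ss xs ys"
    unfolding gcn_move_def ys_def using i xs s c_def by auto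
  have "nim_part ys = nimsum L XOR L ! i XOR t"
    using nim_part_update[OF xs i, of y] G_y r_less L_i
    by (simp add: ys_def L_def nim_part_def c_def)
  also have "\<dots> = v div h" by (simp add: t_def xor_left_self_nat)
  finally have nim_ys: "nim_part ys = v div h" .
  have "y mod h = r" using G_sub_mod[OF i, of y] G_y r_less by simp
  moreover have "sum_list ys = a + y"
    using i xs member_le_sum_list[of c xs] by (simp add: ys_def a_def c_def sum_list_update)
  ultimately have "sum_list ys mod h = (a + r) mod h"
    using mod_add_right_eq[of a y h] by simp
  also have "\<dots> = (a + (v + (h - 1) * a)) mod h"
    unfolding r_def by (rule mod_add_right_eq)
  also have "a + (v + (h - 1) * a) = v + h * a"
    using h_pos by (cases h) simp_all
  finally have "sum_list ys mod h = v mod h" by simp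
  then have "gcn_value ys = v" using nim_ys by (simp add: gcn_value_def)
  with move show ?thesis by blast
qed

lemma grundy_gcn_move:
  assumes "length xs = length Ss"
  shows "grundy (gcn_move h Ss) xs = gcn_value xs"
proof (rule grundy_eqI[where P = "{xs. length xs = length Ss}" and \<mu> = sum_list])
  show "ys \<in> {xs. length xs = length Ss} \<and> sum_list ys < sum_list zs"
    if "zs \<in> {xs. length xs = length Ss}" "gcn_move h Ss zs ys" for zs ys
    using gcn_move_sum_less that by simp
  show "gcn_value ys \<noteq> gcn_value zs"
    if "zs \<in> {xs. length xs = length Ss}" "gcn_move h Ss zs ys" for zs ys
    using gcn_value_move_neq that by simp
  show "\<exists>ys. gcn_move h Ss zs ys \<and> gcn_value ys = v"
    if "zs \<in> {xs. length xs = length Ss}" "v < gcn_value zs" for zs v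
  proof -
    have "v < (nim_part zs + 1) * h"
      using that(2) mod_less_divisor[OF h_pos, of "sum_list zs"] by (simp add: gcn_value_def)
    then have "v div h \<le> nim_part zs" using less_mult_imp_div_less[of v "nim_part zs + 1" h] by simp
    then consider "v div h = nim_part zs" | "v div h < nim_part zs" by linarith
    then show ?thesis
      using that gcn_value_reach_same_nim_part gcn_value_reach_smaller_nim_part by cases auto
  qed
qed (use assms in simp)

end

theorem theorem2p1:
  fixes h :: nat and Ss :: "nat set list" and xs :: "nat list"
  assumes "0 < h"
    and "\<forall>S \<in> set Ss. \<forall>s \<in> S. 0 < s"
    and "\<forall>i < length Ss. \<exists>a :: nat \<Rightarrow> nat. \<forall>x r. r < h \<longrightarrow>
            G_sub (Ss ! i) (x * h + r) = a x * h + r"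
    and "length xs = length Ss"
  shows "grundy (gcn_move h Ss) xs =
           nimsum (map (\<lambda>i. G_sub (Ss ! i) (xs ! i) div h) [0..<length Ss]) * h
           + sum_list xs mod h"
proof -
  interpret stair_gcn h Ss
    using assms(1-3) by unfold_locales
  show ?thesis
    using grundy_gcn_move[OF assms(4)] by (simp add: gcn_value_def nim_part_def)
qed

end
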